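(* Let $\zeta\in\mathcal{PMF}(S)$ and suppose there exist a sequence $(\xi_k)$ in $\mathcal{PMF}(S)$ converging to $\zeta$ and constants $N_0>0$, $a>0$, $b>0$ such that for every $k$ and every $0<N\le N_0$, $$aN^{h/2}\le\nu(\{\eta\in\mathcal{PMF}(S):i(\eta,\xi_k)\le N\})\le bN^{h/2}.$$ Then there exist $N_1\in(0,N_0]$, $A>0$, $B>0$ and $D_1,D_2\in\mathbb R$ such that for all $0<N\le N_1$, $$-A\ln N+D_1\le\Psi(\zeta)_{\ge N}\le -B\ln N+D_2,$$ where $\Psi(\zeta)_{\ge N}=\int_{\{\eta\in\mathcal{PMF}(S):i(\zeta,\eta)\ge N\}}i(\zeta,\eta)^{-h/2}\,d\nu(\eta)$.
   Context: $S$ is a closed connected orientable surface of genus $g\ge2$, $h=6g-6$, $\mathcal T(S)$ its Teichmüller space with base point $o$. $\mathcal{MF}(S)$ is the space of measured foliations, $\mathcal{PMF}(S)$ its projectivization, $i(\cdot,\cdot)$ the continuous geometric intersection number, $\mathrm{Ext}_o$ the extremal length at $o$, $\nu_{Th}$ the Thurston measure. Points of $\mathcal{PMF}(S)$ are identified with their representatives $\xi$ satisfying $\mathrm{Ext}_o(\xi)=1$ (so $i$ becomes a continuous function on $\mathcal{PMF}(S)\times\mathcal{PMF}(S)$), and $\nu$ is the probability measure on $\mathcal{PMF}(S)$ proportional to $A\mapsto\nu_{Th}(\{t\xi:\xi\in A,0\le t\le1\})$. *)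

theory Defs
  imports "HOL-Probability.Probability"
begin

text \<open>Abstract model of (PMF(S), i, nu). P is the carrier (normalized representatives
  with Ext_o = 1), i the continuous, symmetric, nonnegative intersection pairing on P,
  nu a Borel probability measure on P.\<close>

definition pmf_intersection_data ::
  "'a::metric_space set \<Rightarrow> ('a \<Rightarrow> 'a \<Rightarrow> real) \<Rightarrow> 'a measure \<Rightarrow> bool" where
  "pmf_intersection_data P i \<nu> \<longleftrightarrow>
     compact P \<and> P \<noteq> {} \<and>
     continuous_on (P \<times> P) (\<lambda>(x, y). i x y) \<and>
     (\<forall>x\<in>P. \<forall>y\<in>P. i x y = i y x) \<and>
     (\<forall>x\<in>P. \<forall>y\<in>P. 0 \<le> i x y) \<and>
     prob_space \<nu> \<and> space \<nu> = P \<and> sets \<nu> = sets (restrict_space borel P)"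

definition Psi_ge :: "'a measure \<Rightarrow> ('a \<Rightarrow> 'a \<Rightarrow> real) \<Rightarrow> nat \<Rightarrow> 'a \<Rightarrow> real \<Rightarrow> real" where
  "Psi_ge \<nu> i h \<zeta> N =
     (\<integral>\<eta>. indicator {\<eta> \<in> space \<nu>. N \<le> i \<zeta> \<eta>} \<eta> * (i \<zeta> \<eta>) powr (- (real h / 2)) \<partial>\<nu>)"

end

theory Submission
  imports Defs
begin

(*
  Since i is uniformly continuous on the compact set P \<times> P, the functions i(\<cdot>, \<xi>\<^sub>k) converge
  uniformly to i(\<cdot>, \<zeta>), so the distribution function F(t) = \<nu>{\<eta>. i(\<zeta>, \<eta>) \<le> t} inherits the
  bounds a t\<^bsup>h/2\<^esup> \<le> F(t) \<le> b t\<^bsup>h/2\<^esup>. Cut the range of i(\<zeta>, \<cdot>) into shells [s, r s) along a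
  geometric sequence. On a shell the integrand i\<^bsup>-h/2\<^esup> lies between (r s)\<^bsup>-h/2\<^esup> and s\<^bsup>-h/2\<^esup>, and
  the bounds on F make the \<nu>-mass of the shell comparable to s\<^bsup>h/2\<^esup> once r is large; so every
  shell contributes between two positive constants to \<Psi>(\<zeta>)\<^sub>\<ge>\<^sub>N, and about log\<^sub>r(1/N) shells
  lie above N.
*)

lemma log_growth_of_geometric_increments:
  fixes \<Psi> :: "real \<Rightarrow> real"
  assumes r: "r > 1" and M: "M > 0" and L: "L > 0" and U: "U > 0"
    and antimono: "\<And>N N'. 0 < N \<Longrightarrow> N \<le> N' \<Longrightarrow> \<Psi> N' \<le> \<Psi> N"
    and increment: "\<And>s. 0 < s \<Longrightarrow> r * s \<le> M \<Longrightarrow> L \<le> \<Psi> s - \<Psi> (r * s) \<and> \<Psi> s - \<Psi> (r * s) \<le> U"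
  shows "\<exists>A B D1 D2. A > 0 \<and> B > 0 \<and>
           (\<forall>N. 0 < N \<and> N \<le> M \<longrightarrow> - A * ln N + D1 \<le> \<Psi> N \<and> \<Psi> N \<le> - B * ln N + D2)"
proof -
  define t where "t n = M / r ^ n" for n :: nat
  have t_pos: "t n > 0" for n
    using M r by (simp add: t_def)
  have t_Suc: "r * t (Suc n) = t n" for n
    using r by (simp add: t_def)
  have t_le: "t n \<le> M" for n
    using M r by (simp add: t_def divide_le_eq)
  have sampled: "real n * L \<le> \<Psi> (t n) - \<Psi> M \<and> \<Psi> (t n) - \<Psi> M \<le> real n * U" for n
  proof (induction n)
    case 0
    then show ?case by (simp add: t_def)
  next
    case (Suc n)
    then show ?case
      using increment[OF t_pos[of "Suc n"]] t_Suc[of n] t_le[of n] by (simp add: algebra_simps)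
  qed
  have ln_t: "ln (t n) = ln M - real n * ln r" for n
    using M r by (simp add: t_def ln_div ln_realpow)
  have ln_r: "ln r > 0"
    using r by simp
  have bounds: "- (L / ln r) * ln N + (\<Psi> M + L * ln M / ln r - L) \<le> \<Psi> N \<and>
      \<Psi> N \<le> - (U / ln r) * ln N + (\<Psi> M + U * ln M / ln r + U)"
    if N: "0 < N" "N \<le> M" for N
  proof -
    define x where "x = (ln M - ln N) / ln r"
    define n where "n = nat \<lfloor>x\<rfloor>"
    have "x \<ge> 0"
      using N ln_r by (simp add: x_def)
    then have n: "real n \<le> x" "x < real n + 1"
      unfolding n_def by linarith+
    have "ln N \<le> ln (t n)"
      using n(1) ln_r by (simp add: ln_t x_def field_simps)
    then have "N \<le> t n"
      using N t_pos by simp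
    have "ln (t (Suc n)) \<le> ln N"
      using n(2) ln_r by (simp add: ln_t x_def field_simps)
    then have "t (Suc n) \<le> N"
      using N t_pos by simp
    have "- (L / ln r) * ln N + (\<Psi> M + L * ln M / ln r - L) = \<Psi> M + (x - 1) * L"
      using ln_r by (simp add: x_def field_simps)
    also have "\<dots> \<le> \<Psi> M + real n * L"
      using n L by simp
    also have "\<dots> \<le> \<Psi> (t n)"
      using sampled[of n] by simp
    also have "\<dots> \<le> \<Psi> N"
      using antimono N \<open>N \<le> t n\<close> by blast
    finally have lower: "- (L / ln r) * ln N + (\<Psi> M + L * ln M / ln r - L) \<le> \<Psi> N" .
    have "\<Psi> N \<le> \<Psi> (t (Suc n))"
      using antimono t_pos \<open>t (Suc n) \<le> N\<close> by blast
    also have "\<dots> \<le> \<Psi> M + real (Suc n) * U"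
      using sampled[of "Suc n"] by simp
    also have "\<dots> \<le> \<Psi> M + (x + 1) * U"
      using n U by simp
    also have "\<dots> = - (U / ln r) * ln N + (\<Psi> M + U * ln M / ln r + U)"
      using ln_r by (simp add: x_def field_simps)
    finally show ?thesis
      using lower by simp
  qed
  show ?thesis
    using bounds L U ln_r
    by (intro exI[of _ "L / ln r"] exI[of _ "U / ln r"] exI[of _ "\<Psi> M + L * ln M / ln r - L"]
        exI[of _ "\<Psi> M + U * ln M / ln r + U"]) auto
qed

(* Psi_ge \<nu> i h \<zeta> is tail_neg_moment \<nu> (i \<zeta>) (h / 2). *)
definition tail_neg_moment :: "'a measure \<Rightarrow> ('a \<Rightarrow> real) \<Rightarrow> real \<Rightarrow> real \<Rightarrow> real" where
  "tail_neg_moment M g m N = (\<integral>x. indicator {x \<in> space M. N \<le> g x} x * g x powr (- m) \<partial>M)"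

context finite_measure
begin

lemma integrable_tail_neg_moment:
  fixes g :: "'a \<Rightarrow> real" and m N :: real
  assumes g: "g \<in> borel_measurable M" and "0 \<le> m" "0 < N"
  shows "integrable M (\<lambda>x. indicator {x \<in> space M. N \<le> g x} x * g x powr (- m))"
proof (rule integrable_const_bound[where B = "N powr (- m)"])
  show "AE x in M. norm (indicator {x \<in> space M. N \<le> g x} x * g x powr (- m)) \<le> N powr (- m)"
    using assms by (auto simp: indicator_def intro!: powr_mono2')
qed (use g in measurable)

lemma tail_neg_moment_antimono:
  assumes g: "g \<in> borel_measurable M" and "0 \<le> m" "0 < N" "N \<le> N'"
  shows "tail_neg_moment M g m N' \<le> tail_neg_moment M g m N"
  unfolding tail_neg_moment_def using assms
  by (intro integral_mono integrable_tail_neg_moment) (auto simp: indicator_def)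

lemma tail_neg_moment_diff_bounds:
  assumes g: "g \<in> borel_measurable M" and m: "0 \<le> m" and s: "0 < s" "s \<le> t"
  defines "A \<equiv> {x \<in> space M. s \<le> g x \<and> g x < t}"
  shows "t powr (- m) * measure M A \<le> tail_neg_moment M g m s - tail_neg_moment M g m t"
    and "tail_neg_moment M g m s - tail_neg_moment M g m t \<le> s powr (- m) * measure M A"
proof -
  have A: "A \<in> sets M"
    unfolding A_def using g by measurable
  have "tail_neg_moment M g m s - tail_neg_moment M g m t
      = (\<integral>x. indicator {x \<in> space M. s \<le> g x} x * g x powr (- m)
           - indicator {x \<in> space M. t \<le> g x} x * g x powr (- m) \<partial>M)"
    unfolding tail_neg_moment_def
    using s by (intro Bochner_Integration.integral_diff[symmetric] integrable_tail_neg_moment g m) auto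
  also have "\<dots> = (\<integral>x. indicator A x * g x powr (- m) \<partial>M)"
    using s by (intro Bochner_Integration.integral_cong) (auto simp: A_def indicator_def)
  finally have diff: "tail_neg_moment M g m s - tail_neg_moment M g m t
      = (\<integral>x. indicator A x * g x powr (- m) \<partial>M)" .
  have int_A: "integrable M (\<lambda>x. indicator A x * g x powr (- m))"
    using integrable_tail_neg_moment[OF g m s(1)]
  proof (rule Bochner_Integration.integrable_bound)
    show "(\<lambda>x. indicator A x * g x powr (- m)) \<in> borel_measurable M"
      using A g by measurable
  qed (auto simp: A_def indicator_def)
  have ind_A: "integrable M (indicator A :: 'a \<Rightarrow> real)"
    using A by (simp add: emeasure_eq_measure)
  have "t powr (- m) * measure M A = (\<integral>x. t powr (- m) * indicator A x \<partial>M)"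
    using A by (simp add: Int_absorb2 sets.sets_into_space)
  also have "\<dots> \<le> (\<integral>x. indicator A x * g x powr (- m) \<partial>M)"
    by (rule integral_mono[OF integrable_mult_right[OF ind_A] int_A])
       (use s m in \<open>auto simp: A_def indicator_def intro!: powr_mono2'\<close>)
  finally show "t powr (- m) * measure M A \<le> tail_neg_moment M g m s - tail_neg_moment M g m t"
    using diff by simp
  have "(\<integral>x. indicator A x * g x powr (- m) \<partial>M) \<le> (\<integral>x. s powr (- m) * indicator A x \<partial>M)"
    by (rule integral_mono[OF int_A integrable_mult_right[OF ind_A]])
       (use s m in \<open>auto simp: A_def indicator_def intro!: powr_mono2'\<close>)
  also have "\<dots> = s powr (- m) * measure M A"
    using A by (simp add: Int_absorb2 sets.sets_into_space)
  finally show "tail_neg_moment M g m s - tail_neg_moment M g m t \<le> s powr (- m) * measure M A"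
    using diff by simp
qed

lemma shell_measure_bounds:
  fixes g :: "'a \<Rightarrow> real" and m a b T :: real
  assumes g: "g \<in> borel_measurable M" and s: "0 < s" "2 * s \<le> t" "t < T"
    and distr: "\<And>t. 0 < t \<Longrightarrow> t < T \<Longrightarrow>
      a * t powr m \<le> measure M {x \<in> space M. g x \<le> t} \<and>
      measure M {x \<in> space M. g x \<le> t} \<le> b * t powr m"
  defines "A \<equiv> {x \<in> space M. s \<le> g x \<and> g x < t}"
  shows "a * (t / 2) powr m - b * s powr m \<le> measure M A" and "measure M A \<le> b * t powr m"
proof -
  have "a * (t / 2) powr m - b * s powr m
      \<le> measure M {x \<in> space M. g x \<le> t / 2} - measure M {x \<in> space M. g x \<le> s}"
    using distr[of "t / 2"] distr[of s] s by (intro diff_mono) auto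
  also have "\<dots> = measure M ({x \<in> space M. g x \<le> t / 2} - {x \<in> space M. g x \<le> s})"
    using g s by (subst finite_measure_Diff) auto
  also have "\<dots> \<le> measure M A"
    unfolding A_def using g s by (intro finite_measure_mono) auto
  finally show "a * (t / 2) powr m - b * s powr m \<le> measure M A" .
  have "measure M A \<le> measure M {x \<in> space M. g x \<le> t}"
    unfolding A_def using g by (intro finite_measure_mono) auto
  also have "\<dots> \<le> b * t powr m"
    using distr[of t] s by simp
  finally show "measure M A \<le> b * t powr m" .
qed

lemma tail_neg_moment_log_bounds:
  fixes g :: "'a \<Rightarrow> real" and m a b N0 :: real
  assumes g: "g \<in> borel_measurable M" and m: "0 < m" and a: "0 < a" and b: "0 < b"
    and N0: "0 < N0"
    and distr: "\<And>t. 0 < t \<Longrightarrow> t < N0 \<Longrightarrow>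
      a * t powr m \<le> measure M {x \<in> space M. g x \<le> t} \<and>
      measure M {x \<in> space M. g x \<le> t} \<le> b * t powr m"
  shows "\<exists>N1 A B D1 D2. 0 < N1 \<and> N1 \<le> N0 \<and> A > 0 \<and> B > 0 \<and>
           (\<forall>N. 0 < N \<and> N \<le> N1 \<longrightarrow>
              - A * ln N + D1 \<le> tail_neg_moment M g m N \<and>
              tail_neg_moment M g m N \<le> - B * ln N + D2)"
proof -
  (* r is chosen so that b r\<^sup>-\<^sup>m < a 2\<^sup>-\<^sup>m, which makes the lower bound L on each shell positive *)
  define r where "r = 2 * (1 + b / a) powr (1 / m)"
  define L where "L = a * 2 powr (- m) - b * r powr (- m)"
  define U where "U = b * r powr m"
  have "1 < (1 + b / a) powr (1 / m)"
    using powr_less_mono2[of "1 / m" 1 "1 + b / a"] a b m by simp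
  then have r: "2 < r"
    by (simp add: r_def)
  have r_powr: "r powr m = 2 powr m * (1 + b / a)"
    unfolding r_def using a b m by (simp add: powr_mult powr_powr)
  have "b * r powr (- m) = 2 powr (- m) * (b / (1 + b / a))"
    using r_powr r by (simp add: powr_minus field_simps)
  also have "\<dots> < 2 powr (- m) * a"
    using a b by (intro mult_strict_left_mono) (simp_all add: field_simps)
  finally have L: "0 < L"
    by (simp add: L_def mult.commute)
  have U: "0 < U"
    using b r by (simp add: U_def)
  have increment: "L \<le> tail_neg_moment M g m s - tail_neg_moment M g m (r * s) \<and>
      tail_neg_moment M g m s - tail_neg_moment M g m (r * s) \<le> U"
    if s: "0 < s" "r * s \<le> N0 / 2" for s
  proof -
    define t where "t = r * s"
    define A where "A = {x \<in> space M. s \<le> g x \<and> g x < t}"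
    have shell: "0 < s" "2 * s \<le> t" "t < N0"
      using s r N0 by (simp_all add: t_def)
    have "t powr (- m) * (t / 2) powr m = 2 powr (- m)" and "t powr (- m) * s powr m = r powr (- m)"
      using s r by (simp_all add: t_def powr_divide powr_mult powr_minus field_simps)
    then have "L = t powr (- m) * (a * (t / 2) powr m - b * s powr m)"
      by (simp add: L_def right_diff_distrib mult.left_commute)
    also have "\<dots> \<le> t powr (- m) * measure M A"
      unfolding A_def using shell_measure_bounds(1)[OF g shell distr] by (simp add: mult_left_mono)
    also have "\<dots> \<le> tail_neg_moment M g m s - tail_neg_moment M g m t"
      unfolding A_def using g m shell by (intro tail_neg_moment_diff_bounds) simp_all
    finally have lower: "L \<le> tail_neg_moment M g m s - tail_neg_moment M g m t" .
    have "tail_neg_moment M g m s - tail_neg_moment M g m t \<le> s powr (- m) * measure M A"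
      unfolding A_def using g m shell by (intro tail_neg_moment_diff_bounds) simp_all
    also have "\<dots> \<le> s powr (- m) * (b * t powr m)"
      unfolding A_def using shell_measure_bounds(2)[OF g shell distr] by (simp add: mult_left_mono)
    also have "\<dots> = U"
      using s r by (simp add: U_def t_def powr_mult powr_minus field_simps)
    finally show ?thesis
      using lower by (simp add: t_def)
  qed
  have "\<exists>A B D1 D2. A > 0 \<and> B > 0 \<and> (\<forall>N. 0 < N \<and> N \<le> N0 / 2 \<longrightarrow>
      - A * ln N + D1 \<le> tail_neg_moment M g m N \<and> tail_neg_moment M g m N \<le> - B * ln N + D2)"
  proof (rule log_growth_of_geometric_increments[of r "N0 / 2" L U])
    show "tail_neg_moment M g m N' \<le> tail_neg_moment M g m N" if "0 < N" "N \<le> N'" for N N'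
      using g m that by (intro tail_neg_moment_antimono) auto
  qed (use r N0 L U increment in auto)
  moreover have "0 < N0 / 2" "N0 / 2 \<le> N0"
    using N0 by simp_all
  ultimately show ?thesis
    by blast
qed

end

lemma uniform_limit_compact_parameter:
  fixes f :: "'a::metric_space \<times> 'b::metric_space \<Rightarrow> 'c::metric_space"
  assumes T: "compact T" and S: "compact S" and f: "continuous_on (T \<times> S) f"
    and \<xi>: "\<And>k. \<xi> k \<in> T" and \<zeta>: "\<zeta> \<in> T" and lim: "\<xi> \<longlonglongrightarrow> \<zeta>"
  shows "uniform_limit S (\<lambda>k x. f (\<xi> k, x)) (\<lambda>x. f (\<zeta>, x)) sequentially"
proof (rule uniform_limitI)
  fix e :: real
  assume "0 < e"
  have "uniformly_continuous_on (T \<times> S) f"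
    using compact_uniformly_continuous[OF f] T S compact_Times by blast
  then obtain d where d: "0 < d"
    and close: "\<And>p q. p \<in> T \<times> S \<Longrightarrow> q \<in> T \<times> S \<Longrightarrow> dist q p < d \<Longrightarrow> dist (f q) (f p) < e"
    using \<open>0 < e\<close> unfolding uniformly_continuous_on_def by metis
  have "\<forall>\<^sub>F k in sequentially. dist (\<xi> k) \<zeta> < d"
    using lim d by (rule tendstoD)
  then show "\<forall>\<^sub>F k in sequentially. \<forall>x\<in>S. dist (f (\<xi> k, x)) (f (\<zeta>, x)) < e"
  proof eventually_elim
    case (elim k)
    then show ?case
      using close \<xi> \<zeta> by (simp add: dist_Pair_Pair)
  qed
qed

lemma distribution_bounds_uniform_limit:
  fixes f :: "nat \<Rightarrow> 'a \<Rightarrow> real" and \<phi> \<psi> :: "real \<Rightarrow> real"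
  assumes "finite_measure M"
    and f: "\<And>k. f k \<in> borel_measurable M" and g: "g \<in> borel_measurable M"
    and lim: "uniform_limit (space M) f g sequentially"
    and bounds: "\<And>k t. 0 < t \<Longrightarrow> t \<le> T \<Longrightarrow>
      \<phi> t \<le> measure M {x \<in> space M. f k x \<le> t} \<and> measure M {x \<in> space M. f k x \<le> t} \<le> \<psi> t"
    and t: "0 < t" "t < T" and cont: "isCont \<phi> t" "isCont \<psi> t"
  shows "\<phi> t \<le> measure M {x \<in> space M. g x \<le> t} \<and> measure M {x \<in> space M. g x \<le> t} \<le> \<psi> t"
proof -
  interpret finite_measure M by fact
  define F where "F h s = measure M {x \<in> space M. h x \<le> s}" for h :: "'a \<Rightarrow> real" and s
  have shifted: "\<phi> (t - e) \<le> F g t \<and> F g t \<le> \<psi> (t + e)" if e: "0 < e" "e < t" "e < T - t" for e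
  proof -
    have "\<forall>\<^sub>F k in sequentially. \<forall>x\<in>space M. dist (f k x) (g x) < e"
      using lim \<open>0 < e\<close> by (rule uniform_limitD)
    then obtain k where k: "\<forall>x\<in>space M. dist (f k x) (g x) < e"
      unfolding eventually_sequentially by blast
    have "\<phi> (t - e) \<le> F (f k) (t - e)"
      using bounds[of "t - e" k] e by (simp add: F_def)
    also have "\<dots> \<le> F g t"
      unfolding F_def using g k by (intro finite_measure_mono) (auto simp: dist_real_def)
    finally have lower: "\<phi> (t - e) \<le> F g t" .
    have "F g t \<le> F (f k) (t + e)"
      unfolding F_def using f k by (intro finite_measure_mono) (auto simp: dist_real_def)
    also have "\<dots> \<le> \<psi> (t + e)"
      using bounds[of "t + e" k] e t by (simp add: F_def)
    finally show ?thesis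
      using lower by simp
  qed
  have eventually_shifted: "\<forall>\<^sub>F e in at_right 0. \<phi> (t - e) \<le> F g t \<and> F g t \<le> \<psi> (t + e)"
    unfolding eventually_at_right_field
    using t shifted by (intro exI[of _ "min t (T - t)"]) auto
  have "((\<lambda>e. \<phi> (t - e)) \<longlongrightarrow> \<phi> t) (at_right 0)"
    by (rule isCont_tendsto_compose[OF cont(1)]) (auto intro!: tendsto_eq_intros)
  then have "\<phi> t \<le> F g t"
    by (rule tendsto_upperbound) (use eventually_shifted in \<open>auto elim: eventually_mono\<close>)
  have "((\<lambda>e. \<psi> (t + e)) \<longlongrightarrow> \<psi> t) (at_right 0)"
    by (rule isCont_tendsto_compose[OF cont(2)]) (auto intro!: tendsto_eq_intros)
  then have "F g t \<le> \<psi> t"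
    by (rule tendsto_lowerbound) (use eventually_shifted in \<open>auto elim: eventually_mono\<close>)
  show ?thesis
    using \<open>\<phi> t \<le> F g t\<close> \<open>F g t \<le> \<psi> t\<close> by (simp add: F_def)
qed

lemma pmf_intersection_data_measurable:
  assumes data: "pmf_intersection_data P i \<nu>" and c: "c \<in> P"
  shows "i c \<in> borel_measurable \<nu>"
proof -
  have cont: "continuous_on (P \<times> P) (\<lambda>(x, y). i x y)"
    and sets: "sets \<nu> = sets (restrict_space borel P)"
    using data by (simp_all add: pmf_intersection_data_def)
  have "continuous_on P (i c)"
    by (rule continuous_on_compose2[OF cont, of _ "\<lambda>\<eta>. (c, \<eta>)", simplified])
       (auto intro!: continuous_intros simp: c)
  then show ?thesis
    using borel_measurable_continuous_on_restrict measurable_cong_sets sets by blast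
qed

lemma pmf_intersection_data_distribution_bounds_limit:
  fixes \<phi> \<psi> :: "real \<Rightarrow> real"
  assumes data: "pmf_intersection_data P i \<nu>"
    and \<zeta>: "\<zeta> \<in> P" and \<xi>: "\<And>k. \<xi> k \<in> P" and lim: "\<xi> \<longlonglongrightarrow> \<zeta>"
    and bounds: "\<And>k t. 0 < t \<Longrightarrow> t \<le> T \<Longrightarrow>
      \<phi> t \<le> measure \<nu> {\<eta> \<in> P. i \<eta> (\<xi> k) \<le> t} \<and> measure \<nu> {\<eta> \<in> P. i \<eta> (\<xi> k) \<le> t} \<le> \<psi> t"
    and t: "0 < t" "t < T" and cont: "isCont \<phi> t" "isCont \<psi> t"
  shows "\<phi> t \<le> measure \<nu> {\<eta> \<in> P. i \<zeta> \<eta> \<le> t} \<and> measure \<nu> {\<eta> \<in> P. i \<zeta> \<eta> \<le> t} \<le> \<psi> t"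
proof -
  note props = data[unfolded pmf_intersection_data_def]
  interpret prob_space \<nu>
    using props by blast
  have space: "space \<nu> = P"
    using props by blast
  have swap: "{\<eta> \<in> P. i \<eta> c \<le> s} = {\<eta> \<in> space \<nu>. i c \<eta> \<le> s}" if "c \<in> P" for c s
    using props that space by auto
  have "uniform_limit (space \<nu>) (\<lambda>k. i (\<xi> k)) (i \<zeta>) sequentially"
    unfolding space using uniform_limit_compact_parameter[of P P "\<lambda>(x, y). i x y", OF _ _ _ \<xi> \<zeta> lim] props
    by simp
  from distribution_bounds_uniform_limit[OF finite_measure_axioms
      pmf_intersection_data_measurable[OF data \<xi>] pmf_intersection_data_measurable[OF data \<zeta>]
      this _ t cont]
  show ?thesis
    using bounds swap[OF \<xi>] space by simp
qed

theorem mainTheorem12: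
  fixes P :: "'a::metric_space set" and i :: "'a \<Rightarrow> 'a \<Rightarrow> real" and \<nu> :: "'a measure"
    and g h :: nat and \<zeta> :: 'a and \<xi> :: "nat \<Rightarrow> 'a" and N0 a b :: real
  assumes "g \<ge> 2" and "h = 6 * g - 6"
    and "pmf_intersection_data P i \<nu>"
    and "\<zeta> \<in> P" and "\<And>k. \<xi> k \<in> P" and "\<xi> \<longlonglongrightarrow> \<zeta>"
    and "N0 > 0" and "a > 0" and "b > 0"
    and "\<And>k N. 0 < N \<Longrightarrow> N \<le> N0 \<Longrightarrow>
           a * N powr (real h / 2) \<le> measure \<nu> {\<eta> \<in> P. i \<eta> (\<xi> k) \<le> N} \<and>
           measure \<nu> {\<eta> \<in> P. i \<eta> (\<xi> k) \<le> N} \<le> b * N powr (real h / 2)"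
  shows "\<exists>N1 A B D1 D2. 0 < N1 \<and> N1 \<le> N0 \<and> A > 0 \<and> B > 0 \<and>
           (\<forall>N. 0 < N \<and> N \<le> N1 \<longrightarrow>
              - A * ln N + D1 \<le> Psi_ge \<nu> i h \<zeta> N \<and>
              Psi_ge \<nu> i h \<zeta> N \<le> - B * ln N + D2)"
proof -
  have space: "space \<nu> = P"
    using assms(3) by (simp add: pmf_intersection_data_def)
  have "finite_measure \<nu>"
    using assms(3) by (simp add: pmf_intersection_data_def prob_space_def)
  moreover have "0 < real h / 2"
    using assms(1,2) by simp
  moreover have "a * t powr (real h / 2) \<le> measure \<nu> {\<eta> \<in> space \<nu>. i \<zeta> \<eta> \<le> t} \<and>
      measure \<nu> {\<eta> \<in> space \<nu>. i \<zeta> \<eta> \<le> t} \<le> b * t powr (real h / 2)"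
    if "0 < t" "t < N0" for t
    unfolding space using that
    by (intro pmf_intersection_data_distribution_bounds_limit[OF assms(3-6,10)])
       (auto intro!: continuous_intros)
  ultimately show ?thesis
    unfolding Psi_ge_def tail_neg_moment_def[symmetric]
    using finite_measure.tail_neg_moment_log_bounds pmf_intersection_data_measurable[OF assms(3,4)]
      assms(7-9) by blast
qed

end
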